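(* Let $F$ be a face of a polyhedron $Q\subset V$ and $v\in V$. Let $y\in\mathrm{relint}(\sigma_F)$ and let $H=\{x\in V:\langle y,x\rangle=\langle y,v\rangle\}$, $H^-=\{x\in V:\langle y,x\rangle\le\langle y,v\rangle\}$. Then for every $P\in\mathrm{Def}^+(Q)$, the affine cone $C_F+v$ tightly contains $P$ if and only if $P\subseteq H^-$ and $\emptyset\subsetneq P\cap H\subseteq\mathrm{lineal}(C_F)+v$.
   Context: $V$ is a finite-dimensional real vector space with inner product $\langle\cdot,\cdot\rangle$. For a polyhedron $Q$, $\Sigma_Q$ is its outer normal fan; for a face $F$, $\sigma_F\in\Sigma_Q$ is the cone of linear functionals attaining their maximum on $Q$ exactly on $F$; the tangent cone of $Q$ at $F$ is $C_F=\sigma_F^\vee=\mathrm{Cone}(v'-v\mid v\in F,v'\in Q)$. A polyhedron $P$ is an extended deformation of $Q$ if each cone of $\Sigma_P$ is a union of cones of $\Sigma_Q$; $\mathrm{Def}^+(Q)$ is the set of extended deformations of $Q$. $\mathrm{lineal}(C)$ is the lineality space of a cone $C$. A translate $C+v$ tightly contains a polyhedron $P$ if $P\subseteq C+v$ and $P\cap(\mathrm{lineal}(C)+v)\ne\emptyset$. *)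

theory Defs
  imports "HOL-Analysis.Analysis"
begin

text \<open>Linear functionals on V are identified with vectors via the inner product.\<close>

definition argmax_on :: "'a::euclidean_space set \<Rightarrow> 'a \<Rightarrow> 'a set" where
  "argmax_on Q y = {x \<in> Q. \<forall>z\<in>Q. y \<bullet> z \<le> y \<bullet> x}"

definition normal_cone :: "'a::euclidean_space set \<Rightarrow> 'a set \<Rightarrow> 'a set" where
  "normal_cone Q F = {y. argmax_on Q y = F}"

definition normal_fan :: "'a::euclidean_space set \<Rightarrow> 'a set set" where
  "normal_fan Q = {normal_cone Q F | F. F face_of Q \<and> F \<noteq> {}}"

definition tangent_cone :: "'a::euclidean_space set \<Rightarrow> 'a set \<Rightarrow> 'a set" where
  "tangent_cone Q F = convex_cone hull {v' - v | v v'. v \<in> F \<and> v' \<in> Q}"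

definition lineal :: "'a::real_vector set \<Rightarrow> 'a set" where
  "lineal C = C \<inter> uminus ` C"

definition ext_deformations :: "'a::euclidean_space set \<Rightarrow> 'a set set" where
  "ext_deformations Q = {P. polyhedron P \<and>
      (\<forall>\<sigma>\<in>normal_fan P. \<exists>S. S \<subseteq> normal_fan Q \<and> \<sigma> = \<Union>S)}"

definition tightly_contains :: "'a::real_vector set \<Rightarrow> 'a \<Rightarrow> 'a set \<Rightarrow> bool" where
  "tightly_contains C v P \<longleftrightarrow>
     P \<subseteq> (\<lambda>x. x + v) ` C \<and> P \<inter> ((\<lambda>x. x + v) ` lineal C) \<noteq> {}"

end

theory Submission
  imports Defs
begin

text \<open>The linear functional \<open>y\<close> is non-positive on \<open>C\<^sub>F\<close> and vanishes exactly on
  \<open>lineal(C\<^sub>F)\<close>, which gives the forward direction at once. Conversely, let \<open>G = P \<inter> H\<close>,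
  the face of \<open>P\<close> maximising \<open>y\<close>. Since \<open>\<Sigma>\<^sub>P\<close> coarsens \<open>\<Sigma>\<^sub>Q\<close> and \<open>y \<in> \<sigma>\<^sub>F\<close>, every functional
  maximised on \<open>Q\<close> exactly at \<open>F\<close> is maximised on \<open>P\<close> exactly at \<open>G\<close>. Perturbing \<open>y\<close> by an
  arbitrary functional supporting \<open>Q\<close> at a relative interior point of \<open>F\<close> shows that
  \<open>p - g\<close> (for \<open>p \<in> P\<close>, \<open>g \<in> G\<close>) is a feasible direction of \<open>Q\<close> at \<open>F\<close>, i.e. lies in \<open>C\<^sub>F\<close>;
  adding \<open>g - v \<in> lineal(C\<^sub>F)\<close> gives \<open>p - v \<in> C\<^sub>F\<close>.\<close>

lemma mem_translation_image_iff:
  "(x::'a::real_vector) \<in> (\<lambda>x. x + v) ` C \<longleftrightarrow> x - v \<in> C"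
  by (auto intro: rev_image_eqI[of "x - v"])

lemma nonpos_if_add_pos_multiples_nonpos:
  fixes a c :: real
  assumes "\<And>e. e > 0 \<Longrightarrow> a + e * c \<le> 0"
  shows "a \<le> 0"
proof (rule field_le_epsilon)
  fix e :: real assume "e > 0"
  define e' where "e' = e / (\<bar>c\<bar> + 1)"
  have "e' > 0" using \<open>e > 0\<close> by (simp add: e'_def add_nonneg_pos)
  have "- (e' * c) \<le> e' * \<bar>c\<bar>" using \<open>e' > 0\<close> by (simp add: abs_if)
  also have "\<dots> \<le> e' * (\<bar>c\<bar> + 1)" using \<open>e' > 0\<close> by simp
  also have "\<dots> = e" by (simp add: e'_def)
  finally show "a \<le> 0 + e" using assms[OF \<open>e' > 0\<close>] by linarith
qed

text \<open>The defining inequalities inactive at \<open>f0\<close> stay strict on a ball around \<open>f0\<close>.\<close>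

lemma polyhedron_feasible_direction:
  fixes Q :: "'a::euclidean_space set"
  assumes "polyhedron Q" "f0 \<in> Q"
    and active: "\<And>a b. \<forall>q\<in>Q. a \<bullet> q \<le> b \<Longrightarrow> a \<bullet> f0 = b \<Longrightarrow> a \<bullet> d \<le> 0"
  shows "\<exists>t>0. f0 + t *\<^sub>R d \<in> Q"
proof -
  obtain \<F> a b where fin: "finite \<F>" and Q_eq: "Q = \<Inter>\<F>"
    and halfspace: "\<And>h. h \<in> \<F> \<Longrightarrow> h = {x. a h \<bullet> x \<le> b h}"
    using assms(1) unfolding polyhedron_def by metis
  have le: "a h \<bullet> x \<le> b h" if "h \<in> \<F>" "x \<in> Q" for h x
    using that halfspace[of h] Q_eq by blast
  define U where "U = \<Inter>((\<lambda>h. {x. a h \<bullet> x < b h}) ` {h\<in>\<F>. a h \<bullet> f0 \<noteq> b h})"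
  have "open U"
    unfolding U_def using fin by (intro open_INT) (auto simp: open_halfspace_lt)
  moreover have "f0 \<in> U"
    unfolding U_def using le assms(2) by (force simp: order_less_le)
  ultimately obtain e where "e > 0" "ball f0 e \<subseteq> U"
    using open_contains_ball by blast
  define t where "t = e / (2 * (norm d + 1))"
  have "t > 0" using \<open>e > 0\<close> by (simp add: t_def add_nonneg_pos)
  have "t * norm d \<le> t * (norm d + 1)" using \<open>t > 0\<close> by simp
  also have "\<dots> = e / 2"
    unfolding t_def using norm_ge_zero[of d] by (simp add: divide_simps; linarith)
  also have "\<dots> < e" using \<open>e > 0\<close> by simp
  finally have "f0 + t *\<^sub>R d \<in> U"
    using \<open>t > 0\<close> \<open>ball f0 e \<subseteq> U\<close> by (auto simp: dist_norm)
  have "a h \<bullet> (f0 + t *\<^sub>R d) \<le> b h" if "h \<in> \<F>" for h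
  proof (cases "a h \<bullet> f0 = b h")
    case True
    then have "a h \<bullet> d \<le> 0" using active le[OF that] by blast
    then show ?thesis
      using True \<open>t > 0\<close> by (simp add: inner_add_right mult_nonneg_nonpos)
  next
    case False
    then show ?thesis using that \<open>f0 + t *\<^sub>R d \<in> U\<close> by (auto simp: U_def)
  qed
  then have "f0 + t *\<^sub>R d \<in> Q"
    using Q_eq halfspace by blast
  with \<open>t > 0\<close> show ?thesis by blast
qed

lemma supporting_hyperplane_contains_convex:
  assumes "convex F" "f0 \<in> rel_interior F"
    and "\<forall>x\<in>F. a \<bullet> x \<le> b" "a \<bullet> f0 = b"
  shows "F \<subseteq> {x. a \<bullet> x = b}"
proof -
  have face: "F \<inter> {x. a \<bullet> x = b} face_of F"
    using assms(1,3) by (simp add: face_of_Int_supporting_hyperplane_le)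
  have "F \<inter> {x. a \<bullet> x = b} \<inter> rel_interior F \<noteq> {}"
    using assms(2,4) rel_interior_subset by blast
  then have "F \<subseteq> F \<inter> {x. a \<bullet> x = b}"
    by (rule subset_of_face_of[OF face order_refl])
  then show ?thesis by blast
qed

lemma argmax_on_subset: "argmax_on Q y \<subseteq> Q"
  by (auto simp: argmax_on_def)

lemma argmax_on_add_pos_multiple:
  assumes "argmax_on Q y = F" "F \<noteq> {}" "F \<subseteq> argmax_on Q a" "e > 0"
  shows "argmax_on Q (a + e *\<^sub>R y) = F"
proof
  show "F \<subseteq> argmax_on Q (a + e *\<^sub>R y)"
  proof
    fix f assume "f \<in> F"
    then have "f \<in> Q" "\<forall>z\<in>Q. y \<bullet> z \<le> y \<bullet> f" "\<forall>z\<in>Q. a \<bullet> z \<le> a \<bullet> f"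
      using assms(1,3) by (auto simp: argmax_on_def)
    then show "f \<in> argmax_on Q (a + e *\<^sub>R y)"
      using \<open>e > 0\<close> by (auto simp: argmax_on_def inner_add_left intro: add_mono)
  qed
next
  show "argmax_on Q (a + e *\<^sub>R y) \<subseteq> F"
  proof
    fix x assume x: "x \<in> argmax_on Q (a + e *\<^sub>R y)"
    obtain f where f: "f \<in> F" using assms(2) by blast
    have "a \<bullet> x \<le> a \<bullet> f" "(a + e *\<^sub>R y) \<bullet> f \<le> (a + e *\<^sub>R y) \<bullet> x"
      using x f assms(1,3) by (auto simp: argmax_on_def)
    then have "e * (y \<bullet> f) \<le> e * (y \<bullet> x)"
      unfolding inner_add_left inner_scaleR_left by linarith
    then have "y \<bullet> f \<le> y \<bullet> x" using \<open>e > 0\<close> by simp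
    then have "x \<in> argmax_on Q y"
      using x f assms(1) by (force simp: argmax_on_def)
    with assms(1) show "x \<in> F" by simp
  qed
qed

lemma normal_cone_subset_if_ext_deformation:
  assumes "P \<in> ext_deformations Q" "G face_of P" "G \<noteq> {}"
    and "y \<in> normal_cone Q F" "y \<in> normal_cone P G"
  shows "normal_cone Q F \<subseteq> normal_cone P G"
proof -
  have "normal_cone P G \<in> normal_fan P"
    using assms(2,3) unfolding normal_fan_def by blast
  then obtain S where S: "S \<subseteq> normal_fan Q" "normal_cone P G = \<Union>S"
    using assms(1) unfolding ext_deformations_def by blast
  obtain \<sigma> where "\<sigma> \<in> S" "y \<in> \<sigma>" using S(2) assms(5) by blast
  moreover obtain F' where "\<sigma> = normal_cone Q F'"
    using \<open>\<sigma> \<in> S\<close> S(1) unfolding normal_fan_def by blast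
  moreover have "F' = F"
    using calculation assms(4) by (simp add: normal_cone_def)
  ultimately show ?thesis using S(2) by blast
qed

lemma convex_cone_tangent_cone: "convex_cone (tangent_cone Q F)"
  unfolding tangent_cone_def by (rule convex_cone_convex_cone_hull)

lemma diff_mem_tangent_cone:
  assumes "q \<in> Q" "f \<in> F"
  shows "q - f \<in> tangent_cone Q F"
proof -
  have "q - f \<in> {v' - v |v v'. v \<in> F \<and> v' \<in> Q}" using assms by blast
  then show ?thesis unfolding tangent_cone_def by (rule hull_inc)
qed

lemma tangent_cone_subset_normal_halfspace:
  assumes "argmax_on Q y = F"
  shows "tangent_cone Q F \<subseteq>
           {d. y \<bullet> d \<le> 0 \<and> (y \<bullet> d = 0 \<longrightarrow> - d \<in> tangent_cone Q F)}"
proof -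
  define C where "C = tangent_cone Q F"
  have C: "convex_cone C" unfolding C_def by (rule convex_cone_tangent_cone)
  define K where "K = {d. y \<bullet> d \<le> 0 \<and> (y \<bullet> d = 0 \<longrightarrow> - d \<in> C)}"
  have "convex_cone hull {q - f |f q. f \<in> F \<and> q \<in> Q} \<subseteq> K"
  proof (rule hull_minimal)
    show "{q - f |f q. f \<in> F \<and> q \<in> Q} \<subseteq> K"
    proof clarify
      fix f q assume "f \<in> F" "q \<in> Q"
      then have "y \<bullet> q \<le> y \<bullet> f" using assms by (auto simp: argmax_on_def)
      moreover have "f - q \<in> C" if "y \<bullet> q = y \<bullet> f"
      proof -
        have "q \<in> F"
          using that \<open>q \<in> Q\<close> \<open>f \<in> F\<close> assms by (auto simp: argmax_on_def)
        then show ?thesis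
          using \<open>f \<in> F\<close> assms argmax_on_subset diff_mem_tangent_cone C_def by blast
      qed
      ultimately show "q - f \<in> K" by (auto simp: K_def inner_diff_right)
    qed
    show "convex_cone K"
      unfolding convex_cone_iff
    proof (intro conjI ballI allI impI)
      show "0 \<in> K" using convex_cone_contains_0[OF C] by (simp add: K_def)
    next
      fix x z assume "x \<in> K" "z \<in> K"
      then show "x + z \<in> K"
        using convex_cone_add[OF C, of "- x" "- z"] by (auto simp: K_def inner_add_right)
    next
      fix x and c :: real assume "x \<in> K" "0 \<le> c"
      then show "c *\<^sub>R x \<in> K"
        using convex_cone_contains_0[OF C] convex_cone_scaleR[OF C, of c "- x"]
        by (cases "c = 0") (auto simp: K_def mult_nonneg_nonpos)
    qed
  qed
  then show ?thesis by (simp only: K_def C_def tangent_cone_def)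
qed

lemma tangent_cone_subset_halfspace:
  "argmax_on Q y = F \<Longrightarrow> tangent_cone Q F \<subseteq> {d. y \<bullet> d \<le> 0}"
  using tangent_cone_subset_normal_halfspace by blast

lemma lineal_tangent_cone:
  assumes "argmax_on Q y = F"
  shows "lineal (tangent_cone Q F) = tangent_cone Q F \<inter> {d. y \<bullet> d = 0}"
proof (intro set_eqI)
  let ?C = "tangent_cone Q F"
  fix d
  have "d \<in> lineal ?C \<longleftrightarrow> d \<in> ?C \<and> - d \<in> ?C"
    unfolding lineal_def by (auto intro: image_eqI[of d uminus "- d"])
  moreover have "- d \<in> ?C \<longleftrightarrow> y \<bullet> d = 0" if "d \<in> ?C"
  proof
    assume "- d \<in> ?C"
    then have "y \<bullet> d \<le> 0" "y \<bullet> (- d) \<le> 0"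
      using that tangent_cone_subset_halfspace[OF assms] by blast+
    then show "y \<bullet> d = 0" by simp
  next
    assume "y \<bullet> d = 0"
    then show "- d \<in> ?C" using that tangent_cone_subset_normal_halfspace[OF assms] by blast
  qed
  ultimately show "d \<in> lineal ?C \<longleftrightarrow> d \<in> ?C \<inter> {d. y \<bullet> d = 0}" by blast
qed

lemma mem_tangent_cone_if_feasible_direction:
  assumes "polyhedron Q" "F \<subseteq> Q" "f0 \<in> F"
    and "\<And>a b. \<forall>q\<in>Q. a \<bullet> q \<le> b \<Longrightarrow> a \<bullet> f0 = b \<Longrightarrow> a \<bullet> d \<le> 0"
  shows "d \<in> tangent_cone Q F"
proof -
  have "f0 \<in> Q" using assms(2,3) by blast
  have "\<exists>t>0. f0 + t *\<^sub>R d \<in> Q"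
    using assms(4) by (rule polyhedron_feasible_direction[OF assms(1) \<open>f0 \<in> Q\<close>])
  then obtain t where "t > 0" "f0 + t *\<^sub>R d \<in> Q" by blast
  then have "t *\<^sub>R d \<in> tangent_cone Q F"
    using diff_mem_tangent_cone[of "f0 + t *\<^sub>R d" Q f0 F] assms(3) by simp
  with \<open>t > 0\<close> have "inverse t *\<^sub>R (t *\<^sub>R d) \<in> tangent_cone Q F"
    by (simp add: convex_cone_scaleR convex_cone_tangent_cone del: scaleR_scaleR)
  then show ?thesis using \<open>t > 0\<close> by simp
qed

text \<open>A functional \<open>a\<close> supporting \<open>Q\<close> at a relative interior point of \<open>F\<close> is constant on
  \<open>F\<close>, so \<open>a + e y\<close> (\<open>e > 0\<close>) still lies in \<open>\<sigma>\<^sub>F\<close>, hence is maximised on \<open>P\<close> exactly at \<open>G\<close>;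
  letting \<open>e \<rightarrow> 0\<close> gives \<open>a \<bullet> (p - g) \<le> 0\<close>.\<close>

lemma deformation_diff_mem_tangent_cone:
  assumes "polyhedron Q" "F face_of Q" "F \<noteq> {}" "argmax_on Q y = F"
    and "normal_cone Q F \<subseteq> normal_cone P G"
    and "p \<in> P" "g \<in> G"
  shows "p - g \<in> tangent_cone Q F"
proof -
  have "F \<subseteq> Q" "convex F"
    using assms(2) face_of_imp_subset face_of_imp_convex by blast+
  obtain f0 where f0: "f0 \<in> rel_interior F"
    using assms(3) \<open>convex F\<close> rel_interior_eq_empty by blast
  then have "f0 \<in> F" using rel_interior_subset by blast
  show ?thesis
  proof (rule mem_tangent_cone_if_feasible_direction[OF assms(1) \<open>F \<subseteq> Q\<close> \<open>f0 \<in> F\<close>])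
    fix a b assume supp: "\<forall>q\<in>Q. a \<bullet> q \<le> b" "a \<bullet> f0 = b"
    have "F \<subseteq> {x. a \<bullet> x = b}"
      using supp \<open>F \<subseteq> Q\<close> by (intro supporting_hyperplane_contains_convex[OF \<open>convex F\<close> f0]) auto
    then have "F \<subseteq> argmax_on Q a"
      using supp \<open>F \<subseteq> Q\<close> by (auto simp: argmax_on_def)
    have "a \<bullet> (p - g) + e * (y \<bullet> (p - g)) \<le> 0" if "e > 0" for e
    proof -
      have "argmax_on Q (a + e *\<^sub>R y) = F"
        using argmax_on_add_pos_multiple[OF assms(4,3) \<open>F \<subseteq> argmax_on Q a\<close> that] .
      then have "argmax_on P (a + e *\<^sub>R y) = G"
        using assms(5) unfolding normal_cone_def by blast
      then have "(a + e *\<^sub>R y) \<bullet> p \<le> (a + e *\<^sub>R y) \<bullet> g"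
        using assms(6,7) unfolding argmax_on_def by blast
      then show ?thesis by (simp add: inner_add_left inner_diff_right right_diff_distrib)
    qed
    then show "a \<bullet> (p - g) \<le> 0" by (rule nonpos_if_add_pos_multiples_nonpos)
  qed
qed

lemma argmax_on_eq_supporting_hyperplane:
  assumes "P \<subseteq> {x. y \<bullet> x \<le> c}" "P \<inter> {x. y \<bullet> x = c} \<noteq> {}"
  shows "argmax_on P y = P \<inter> {x. y \<bullet> x = c}"
proof (intro set_eqI iffI)
  obtain x0 where x0: "x0 \<in> P" "y \<bullet> x0 = c" using assms(2) by blast
  fix x assume "x \<in> argmax_on P y"
  then have "x \<in> P" "y \<bullet> x0 \<le> y \<bullet> x" using x0 by (auto simp: argmax_on_def)
  with assms(1) x0 show "x \<in> P \<inter> {x. y \<bullet> x = c}" by force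
next
  fix x assume "x \<in> P \<inter> {x. y \<bullet> x = c}"
  with assms(1) show "x \<in> argmax_on P y" by (auto simp: argmax_on_def)
qed

lemma deformation_subset_translated_tangent_cone:
  assumes "polyhedron Q" "F face_of Q" "F \<noteq> {}" "argmax_on Q y = F"
    and "P \<in> ext_deformations Q" "P \<subseteq> {x. y \<bullet> x \<le> y \<bullet> v}"
    and "g \<in> P" "y \<bullet> g = y \<bullet> v" "g - v \<in> tangent_cone Q F"
  shows "P \<subseteq> (\<lambda>x. x + v) ` tangent_cone Q F"
proof -
  define G where "G = P \<inter> {x. y \<bullet> x = y \<bullet> v}"
  have "g \<in> G" using assms(7,8) by (simp add: G_def)
  then have "y \<in> normal_cone P G"
    using assms(6) unfolding G_def normal_cone_def
    by (intro CollectI argmax_on_eq_supporting_hyperplane) auto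
  moreover have "y \<in> normal_cone Q F" using assms(4) by (simp add: normal_cone_def)
  moreover have "G face_of P"
    unfolding G_def using assms(5,6) polyhedron_imp_convex
    by (intro face_of_Int_supporting_hyperplane_le) (auto simp: ext_deformations_def)
  ultimately have "normal_cone Q F \<subseteq> normal_cone P G"
    using normal_cone_subset_if_ext_deformation[OF assms(5)] \<open>g \<in> G\<close> by blast
  have "p - v \<in> tangent_cone Q F" if "p \<in> P" for p
  proof -
    have "p - g \<in> tangent_cone Q F"
      using \<open>normal_cone Q F \<subseteq> _\<close> that \<open>g \<in> G\<close>
      by (rule deformation_diff_mem_tangent_cone[OF assms(1-4)])
    then have "(p - g) + (g - v) \<in> tangent_cone Q F"
      using assms(9) convex_cone_add convex_cone_tangent_cone by blast
    then show ?thesis by simp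
  qed
  then show ?thesis by (auto simp: mem_translation_image_iff)
qed

theorem lemma2p4:
  fixes Q F P :: "'a::euclidean_space set" and v y :: 'a
  assumes "polyhedron Q" and "F face_of Q" and "F \<noteq> {}"
    and "y \<in> rel_interior (normal_cone Q F)"
    and "P \<in> ext_deformations Q"
  shows "tightly_contains (tangent_cone Q F) v P \<longleftrightarrow>
           P \<subseteq> {x. y \<bullet> x \<le> y \<bullet> v} \<and>
           {} \<subset> P \<inter> {x. y \<bullet> x = y \<bullet> v} \<and>
           P \<inter> {x. y \<bullet> x = y \<bullet> v} \<subseteq> (\<lambda>x. x + v) ` lineal (tangent_cone Q F)"
proof -
  define C where "C = tangent_cone Q F"
  have yF: "argmax_on Q y = F"
    using rel_interior_subset assms(4) by (auto simp: normal_cone_def)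
  have "y \<bullet> x \<le> y \<bullet> v" if "x \<in> (\<lambda>x. x + v) ` C" for x
    using that tangent_cone_subset_halfspace[OF yF]
    by (auto simp: C_def mem_translation_image_iff inner_diff_right)
  moreover have "x \<in> (\<lambda>x. x + v) ` lineal C \<longleftrightarrow> x \<in> (\<lambda>x. x + v) ` C \<and> y \<bullet> x = y \<bullet> v" for x
    by (auto simp: C_def lineal_tangent_cone[OF yF] mem_translation_image_iff inner_diff_right)
  moreover have "P \<subseteq> (\<lambda>x. x + v) ` C"
    if "P \<subseteq> {x. y \<bullet> x \<le> y \<bullet> v}" "g \<in> P" "y \<bullet> g = y \<bullet> v" "g \<in> (\<lambda>x. x + v) ` C" for g
    unfolding C_def using that
    by (intro deformation_subset_translated_tangent_cone[OF assms(1-3) yF assms(5)])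
       (auto simp: C_def mem_translation_image_iff)
  ultimately show ?thesis
    unfolding C_def[symmetric] tightly_contains_def by blast
qed

end
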